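(* Let $\rho,\mu,\lambda$ satisfy the standing assumptions in the context. Define the matrix-valued function $\mathbf{G}(\mathbf{q}):=\int_{\mathbb{R}^d}\rho(\mathbf{q}-\mathbf{y})\frac{(\mathbf{q}-\mathbf{y})\otimes(\mathbf{q}-\mathbf{y})}{|\mathbf{q}-\mathbf{y}|^2}\mu_s(\mathbf{q},\mathbf{y})\,d\mathbf{y}$ and the multiplication operator $\mathbb{G}\boldsymbol{\psi}(\mathbf{q}):=\mathbf{G}(\mathbf{q})\boldsymbol{\psi}(\mathbf{q})$. Then $\mathbb{G}:[L^2(\mathbb{T}^d)]^d\to[L^2(\mathbb{T}^d)]^d$ is a bounded invertible linear operator.
   Context: Standing assumptions: $\rho\in L^1(\mathbb{R}^d)$ with $\rho\ge0$, $\rho(-\mathbf{z})=\rho(\mathbf{z})$, $a_1:=\int\rho>0$, $a_2:=\int|\mathbf{z}|^2\rho<\infty$; there exist $\delta_0>0$ and an open $\mathcal{J}\subset\mathbb{S}^{d-1}$ with $\mathcal{H}^{d-1}(\mathcal{J})>0$ such that $\Lambda\cap B_{\delta_0}(\mathbf{0})\subset\operatorname{supp}\rho$, $\Lambda=\{\mathbf{x}:\mathbf{x}/|\mathbf{x}|\in\mathcal{J}\cup-\mathcal{J}\}$. $\mu$ is periodic with period cell $\mathbb{T}^d=[0,1]^d$; $\lambda(\mathbf{x},\mathbf{y})$ is unit-periodic in $\mathbf{y}$; $0<\alpha_1\le\lambda(\mathbf{x},\mathbf{y}),\mu(\mathbf{y})\le\alpha_2<\infty$; $\lambda(\cdot,\mathbf{y})\in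 C^\infty$. $\mu_s(\mathbf{x},\mathbf{y})=\frac12(\mu(\mathbf{x})+\mu(\mathbf{y}))$. $[L^2(\mathbb{T}^d)]^d$ denotes the space of $[0,1]^d$-periodic vector fields on $\mathbb{R}^d$ that are square integrable over $\mathbb{T}^d$. *)

theory Defs
  imports "HOL-Analysis.Analysis"
begin

definition unit_periodic :: "(real^'d \<Rightarrow> 'b) \<Rightarrow> bool" where
  "unit_periodic f \<longleftrightarrow> (\<forall>x k. (\<forall>i. k $ i \<in> \<int>) \<longrightarrow> f (x + k) = f x)"

definition cell :: "(real^'d) set" where
  "cell = cbox 0 One"

text \<open>[L^2(T^d)]^d: periodic measurable vector fields square integrable over the cell.\<close>
definition L2per :: "(real^'d \<Rightarrow> real^'d) \<Rightarrow> bool" where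
  "L2per \<psi> \<longleftrightarrow> \<psi> \<in> borel_measurable lborel \<and> unit_periodic \<psi> \<and>
      set_integrable lborel cell (\<lambda>x. (norm (\<psi> x))\<^sup>2)"

definition L2norm_sq :: "(real^'d \<Rightarrow> real^'d) \<Rightarrow> real" where
  "L2norm_sq \<psi> = (LINT x:cell|lborel. (norm (\<psi> x))\<^sup>2)"

definition esupp :: "(real^'d \<Rightarrow> real) \<Rightarrow> (real^'d) set" where
  "esupp \<rho> = {x. \<forall>e>0. emeasure lborel ({z. \<rho> z \<noteq> 0} \<inter> ball x e) > 0}"

definition outer :: "real^'d \<Rightarrow> real^'d \<Rightarrow> real^'d^'d" where
  "outer a b = (\<chi> i j. a $ i * b $ j)"

definition mu_s :: "(real^'d \<Rightarrow> real) \<Rightarrow> real^'d \<Rightarrow> real^'d \<Rightarrow> real" where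
  "mu_s \<mu> x y = (\<mu> x + \<mu> y) / 2"

text \<open>The matrix field G(q).  (At y = q the integrand is 0 by the HOL convention
  x/0 = 0; this is a null set.)\<close>
definition Gmat :: "(real^'d \<Rightarrow> real) \<Rightarrow> (real^'d \<Rightarrow> real) \<Rightarrow> real^'d \<Rightarrow> real^'d^'d" where
  "Gmat \<rho> \<mu> q = (LINT y|lborel.
      (\<rho> (q - y) * mu_s \<mu> q y / (norm (q - y))\<^sup>2) *\<^sub>R outer (q - y) (q - y))"

definition Gop :: "(real^'d \<Rightarrow> real) \<Rightarrow> (real^'d \<Rightarrow> real) \<Rightarrow> (real^'d \<Rightarrow> real^'d) \<Rightarrow> real^'d \<Rightarrow> real^'d" where
  "Gop \<rho> \<mu> \<psi> q = Gmat \<rho> \<mu> q *v \<psi> q"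

end

(*
  Writing z = q - y, G(q) = \<integral> \<rho>(z) \<mu>\<^sub>s(q, q - z) (z \<otimes> z)/|z|\<^sup>2 dz.  Since \<alpha>1 \<le> \<mu>\<^sub>s \<le> \<alpha>2,
  the norm of G(q) is at most \<alpha>2 a1, and as a quadratic form G(q) dominates \<alpha>1 M with
  M = \<integral> \<rho>(z) (z \<otimes> z)/|z|\<^sup>2 dz.  M is positive definite: a cone of positive measure lies in
  no hyperplane, so every direction \<xi> has a point of the cone \<Lambda> near which \<rho> charges a set
  of positive measure on which z \<bullet> \<xi> \<noteq> 0.  Hence c |\<xi>| \<le> |G(q) \<xi>| \<le> C |\<xi>| uniformly in q,
  and a measurable periodic matrix field with such bounds is an isomorphism of periodic L\<^sup>2
  fields; its inverse is pointwise given by Cramer's rule, hence measurable and periodic.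
*)
theory Submission
  imports Defs
begin

lemma borel_measurable_vec_nth[measurable (raw)]:
  fixes f :: "'a \<Rightarrow> 'b::euclidean_space^'n"
  assumes "f \<in> borel_measurable M"
  shows "(\<lambda>x. f x $ i) \<in> borel_measurable M"
  using borel_measurable_continuous_on[OF linear_continuous_on[OF bounded_linear_vec_nth] assms] .

lemma borel_measurable_vec_lambda[measurable (raw)]:
  fixes g :: "'a \<Rightarrow> 'n::finite \<Rightarrow> 'b::euclidean_space"
  assumes "\<And>i. (\<lambda>x. g x i) \<in> borel_measurable M"
  shows "(\<lambda>x. vec_lambda (g x)) \<in> borel_measurable M"
proof (subst borel_measurable_euclidean_space, intro ballI)
  fix b :: "'b^'n" assume "b \<in> Basis"
  then obtain i u where b: "b = axis i u" "u \<in> Basis" by (auto simp: Basis_vec_def)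
  have "(\<lambda>x. g x i \<bullet> u) \<in> borel_measurable M" using assms[of i] by measurable
  then show "(\<lambda>x. vec_lambda (g x) \<bullet> b) \<in> borel_measurable M" by (simp add: b inner_axis)
qed

lemma lborel_integral_reflect:
  fixes f :: "'a::euclidean_space \<Rightarrow> 'b::{banach, second_countable_topology}"
  assumes "f \<in> borel_measurable borel"
  shows "(\<integral>y. f (c - y) \<partial>lborel) = (\<integral>z. f z \<partial>lborel)"
proof -
  have "distr lborel borel (\<lambda>y. c - y) = (lborel :: 'a measure)"
    by (subst lborel_affine[of "-1" c]) (simp_all add: density_1)
  then show ?thesis
    using integral_distr[of "\<lambda>y. c - y" lborel borel f] assms by simp
qed

lemma outer_row: "outer a b $ i = a $ i *\<^sub>R b"
  by (simp add: outer_def vec_eq_iff)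

lemma norm_outer: "norm (outer a b) = norm a * norm (b :: real^'n)"
proof -
  have "norm (outer a b) = L2_set (\<lambda>i. \<bar>a $ i\<bar> * norm b) UNIV"
    unfolding norm_vec_def[of "outer a b"] by (simp add: outer_row)
  also have "\<dots> = norm a * norm b"
    unfolding norm_vec_def[of a] by (simp add: L2_set_left_distrib)
  finally show ?thesis .
qed

lemma inner_outer_self: "\<xi> \<bullet> (outer a a *v \<xi>) = (a \<bullet> (\<xi> :: real^'n))\<^sup>2"
  by (simp add: outer_def matrix_vector_mult_def inner_vec_def power2_eq_square
      sum_distrib_left sum_distrib_right mult_ac)

lemma norm_matrix_vector_mult_le: "norm (A *v x) \<le> norm A * norm (x :: real^'n)"
proof -
  have "norm (A *v x) = L2_set (\<lambda>i. \<bar>A $ i \<bullet> x\<bar>) UNIV"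
    by (simp add: norm_vec_def matrix_vector_mul_component)
  also have "\<dots> \<le> L2_set (\<lambda>i. norm (A $ i) * norm x) UNIV"
    by (intro L2_set_mono Cauchy_Schwarz_ineq2) auto
  also have "\<dots> = norm A * norm x"
    by (simp add: norm_vec_def L2_set_left_distrib)
  finally show ?thesis .
qed

lemma inner_integral_scaled_outer:
  fixes v :: "'a \<Rightarrow> real^'n"
  assumes "integrable M (\<lambda>y. w y *\<^sub>R outer (v y) (v y))"
  shows "\<xi> \<bullet> ((\<integral>y. w y *\<^sub>R outer (v y) (v y) \<partial>M) *v \<xi>) = (\<integral>y. w y * (v y \<bullet> \<xi>)\<^sup>2 \<partial>M)"
    and "integrable M (\<lambda>y. w y * (v y \<bullet> \<xi>)\<^sup>2)"
proof -
  have "linear (\<lambda>A::real^'n^'n. \<xi> \<bullet> (A *v \<xi>))"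
    by (intro linearI) (simp_all add: matrix_vector_mult_add_rdistrib inner_add_right
        scaleR_matrix_vector_assoc[symmetric])
  then have "bounded_linear (\<lambda>A::real^'n^'n. \<xi> \<bullet> (A *v \<xi>))"
    by (simp add: linear_conv_bounded_linear)
  note lin = integral_bounded_linear[OF this assms] integrable_bounded_linear[OF this assms]
  show "\<xi> \<bullet> ((\<integral>y. w y *\<^sub>R outer (v y) (v y) \<partial>M) *v \<xi>) = (\<integral>y. w y * (v y \<bullet> \<xi>)\<^sup>2 \<partial>M)"
    using lin(1) by (simp add: scaleR_matrix_vector_assoc[symmetric] inner_outer_self)
  show "integrable M (\<lambda>y. w y * (v y \<bullet> \<xi>)\<^sup>2)"
    using lin(2) by (simp add: scaleR_matrix_vector_assoc[symmetric] inner_outer_self)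
qed

lemma pos_def_quadratic_form_coercive:
  fixes M :: "real^'n^'n"
  assumes pos: "\<And>\<xi>. \<xi> \<noteq> 0 \<Longrightarrow> 0 < \<xi> \<bullet> (M *v \<xi>)"
  obtains c where "0 < c" "\<And>\<xi>. c * (norm \<xi>)\<^sup>2 \<le> \<xi> \<bullet> (M *v \<xi>)"
proof -
  let ?Q = "\<lambda>\<xi>. \<xi> \<bullet> (M *v \<xi>)"
  have "continuous_on (sphere 0 1) ?Q"
    by (intro continuous_intros linear_continuous_on matrix_vector_mul_bounded_linear)
  moreover have "sphere (0 :: real^'n) 1 \<noteq> {}"
    by simp
  ultimately obtain u where u: "u \<in> sphere 0 1" and min: "\<And>\<xi>. \<xi> \<in> sphere 0 1 \<Longrightarrow> ?Q u \<le> ?Q \<xi>"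
    using continuous_attains_inf[OF compact_sphere] by blast
  show thesis
  proof (rule that)
    show "0 < ?Q u"
      using u by (intro pos) auto
    show "?Q u * (norm \<xi>)\<^sup>2 \<le> ?Q \<xi>" for \<xi>
    proof (cases "\<xi> = 0")
      case False
      have "?Q u \<le> ?Q (\<xi> /\<^sub>R norm \<xi>)"
        using False by (intro min) simp
      also have "\<dots> = ?Q \<xi> / (norm \<xi>)\<^sup>2"
        by (simp add: matrix_vector_mult_scaleR power2_eq_square divide_inverse mult_ac)
      finally show ?thesis
        using False by (simp add: field_simps)
    qed simp
  qed
qed

lemma norm_matrix_vector_mult_ge:
  fixes A :: "real^'n^'n"
  assumes "c * (norm \<xi>)\<^sup>2 \<le> \<xi> \<bullet> (A *v \<xi>)"
  shows "c * norm \<xi> \<le> norm (A *v \<xi>)"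
proof (cases "\<xi> = 0")
  case False
  have "norm \<xi> * (c * norm \<xi>) \<le> norm \<xi> * norm (A *v \<xi>)"
    using assms order_trans[OF abs_ge_self Cauchy_Schwarz_ineq2[of \<xi> "A *v \<xi>"]]
    by (simp add: power2_eq_square mult_ac)
  then show ?thesis
    using False by simp
qed simp

lemma cone_positive_measure_not_orthogonal:
  fixes \<xi> :: "'a::euclidean_space"
  assumes cone: "emeasure lborel {t *\<^sub>R x | t x. x \<in> J \<and> 0 < t \<and> t < 1} > 0" and "\<xi> \<noteq> 0"
  obtains u where "u \<in> J" "\<xi> \<bullet> u \<noteq> 0"
proof -
  have "\<exists>u\<in>J. \<xi> \<bullet> u \<noteq> 0"
  proof (rule ccontr)
    assume "\<not> (\<exists>u\<in>J. \<xi> \<bullet> u \<noteq> 0)"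
    then have "{t *\<^sub>R x | t x. x \<in> J \<and> 0 < t \<and> t < 1} \<subseteq> {x. \<xi> \<bullet> x = 0}"
      by auto
    moreover have "{x. \<xi> \<bullet> x = 0} \<in> null_sets lborel"
      using negligible_hyperplane[of \<xi> 0] \<open>\<xi> \<noteq> 0\<close>
      by (simp add: negligible_iff_null_sets null_sets_completion_iff)
    ultimately have "emeasure lborel {t *\<^sub>R x | t x. x \<in> J \<and> 0 < t \<and> t < 1} = 0"
      by (cases "{t *\<^sub>R x | t x. x \<in> J \<and> 0 < t \<and> t < 1} \<in> sets lborel")
        (auto dest: null_sets_subset simp: emeasure_notin_sets)
    then show False
      using cone by simp
  qed
  then show thesis
    using that by blast
qed

lemma L2per_dominated:
  fixes g h :: "real^'d \<Rightarrow> real^'d"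
  assumes h: "L2per h" and g: "g \<in> borel_measurable lborel" "unit_periodic g"
    and le: "\<And>x. norm (g x) \<le> K * norm (h x)"
  shows "L2per g"
proof -
  have "set_integrable lborel cell (\<lambda>x. K\<^sup>2 * (norm (h x))\<^sup>2)"
    using h by (intro set_integrable_mult_right) (simp add: L2per_def)
  then have "set_integrable lborel cell (\<lambda>x. (norm (g x))\<^sup>2)"
    unfolding set_integrable_def
  proof (rule Bochner_Integration.integrable_bound)
    show "(\<lambda>x. indicator cell x *\<^sub>R (norm (g x))\<^sup>2) \<in> borel_measurable lborel"
      using g(1) by (simp add: cell_def)
    have "(norm (g x))\<^sup>2 \<le> K\<^sup>2 * (norm (h x))\<^sup>2" for x
      using power_mono[OF le[of x] norm_ge_zero, of 2] by (simp add: power_mult_distrib)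
    then show "AE x in lborel. norm (indicator cell x *\<^sub>R (norm (g x))\<^sup>2 :: real)
        \<le> norm (indicator cell x *\<^sub>R (K\<^sup>2 * (norm (h x))\<^sup>2) :: real)"
      by (intro AE_I2) (simp add: indicator_def)
  qed
  with g show ?thesis
    by (simp add: L2per_def)
qed

lemma L2norm_sq_dominated:
  fixes g h :: "real^'d \<Rightarrow> real^'d"
  assumes "L2per g" "L2per h" and le: "\<And>x. norm (g x) \<le> K * norm (h x)"
  shows "L2norm_sq g \<le> K\<^sup>2 * L2norm_sq h"
proof -
  have "(norm (g x))\<^sup>2 \<le> K\<^sup>2 * (norm (h x))\<^sup>2" for x
    using power_mono[OF le[of x] norm_ge_zero, of 2] by (simp add: power_mult_distrib)
  then have "L2norm_sq g \<le> (LINT x:cell|lborel. K\<^sup>2 * (norm (h x))\<^sup>2)"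
    unfolding L2norm_sq_def using assms(1,2)
    by (intro set_integral_mono set_integrable_mult_right) (auto simp: L2per_def)
  then show ?thesis
    by (simp add: L2norm_sq_def)
qed

lemma L2per_matrix_mult:
  fixes A :: "real^'d \<Rightarrow> real^'d^'d"
  assumes A: "A \<in> borel_measurable lborel" "unit_periodic A"
    and bound: "\<And>q \<xi>. norm (A q *v \<xi>) \<le> C * norm \<xi>" and \<psi>: "L2per \<psi>"
  shows "L2per (\<lambda>q. A q *v \<psi> q)"
proof (rule L2per_dominated[OF \<psi> _ _ bound])
  have [measurable]: "\<psi> \<in> borel_measurable lborel"
    using \<psi> by (simp add: L2per_def)
  show "(\<lambda>q. A q *v \<psi> q) \<in> borel_measurable lborel"
    using A(1) unfolding matrix_vector_mult_def by measurable
  show "unit_periodic (\<lambda>q. A q *v \<psi> q)"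
    using A(2) \<psi> by (simp add: unit_periodic_def L2per_def)
qed

lemma L2per_matrix_mult_solvable:
  fixes A :: "real^'d \<Rightarrow> real^'d^'d"
  assumes A: "A \<in> borel_measurable lborel" "unit_periodic A"
    and c: "0 < c" and lower: "\<And>q \<xi>. c * norm \<xi> \<le> norm (A q *v \<xi>)" and \<phi>: "L2per \<phi>"
  shows "\<exists>\<psi>. L2per \<psi> \<and> (\<forall>q. A q *v \<psi> q = \<phi> q)"
proof -
  have [measurable]: "\<phi> \<in> borel_measurable lborel"
    using \<phi> by (simp add: L2per_def)
  have "inj ((*v) (A q))" for q
  proof (intro linear_inj_iff_eq_0[THEN iffD2] matrix_vector_mul_linear allI impI)
    fix \<xi> assume "A q *v \<xi> = 0"
    then show "\<xi> = 0"
      using lower[where q=q and \<xi>=\<xi>] c by (simp add: mult_le_0_iff)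
  qed
  then have det: "det (A q) \<noteq> 0" for q
    using det_nz_iff_inj[OF matrix_vector_mul_linear[of "A q"]] by simp
  define \<psi> where "\<psi> q = (\<chi> k. det (\<chi> i j. if j = k then \<phi> q $ i else A q $ i $ j) / det (A q))" for q
  have solves: "A q *v \<psi> q = \<phi> q" for q
    using cramer[OF det[of q]] by (simp add: \<psi>_def)
  have "L2per \<psi>"
  proof (rule L2per_dominated[OF \<phi>])
    show "\<psi> \<in> borel_measurable lborel"
      using A(1) unfolding \<psi>_def[abs_def] det_def by measurable
    show "unit_periodic \<psi>"
      unfolding unit_periodic_def
    proof (intro allI impI)
      fix x k :: "real^'d" assume "\<forall>i. k $ i \<in> \<int>"
      then have "A (x + k) = A x" "\<phi> (x + k) = \<phi> x"
        using A(2) \<phi> by (simp_all add: unit_periodic_def L2per_def)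
      then show "\<psi> (x + k) = \<psi> x"
        unfolding \<psi>_def by (simp only:)
    qed
    show "norm (\<psi> x) \<le> (1 / c) * norm (\<phi> x)" for x
      using lower[where q=x and \<xi>="\<psi> x"] c by (simp add: solves field_simps)
  qed
  with solves show ?thesis
    by blast
qed

lemma L2norm_sq_matrix_mult_bounds:
  fixes A :: "real^'d \<Rightarrow> real^'d^'d"
  assumes A: "A \<in> borel_measurable lborel" "unit_periodic A"
    and c: "0 < c" and lower: "\<And>q \<xi>. c * norm \<xi> \<le> norm (A q *v \<xi>)"
    and upper: "\<And>q \<xi>. norm (A q *v \<xi>) \<le> C * norm \<xi>" and \<psi>: "L2per \<psi>"
  shows "c\<^sup>2 * L2norm_sq \<psi> \<le> L2norm_sq (\<lambda>q. A q *v \<psi> q)"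
    and "L2norm_sq (\<lambda>q. A q *v \<psi> q) \<le> C\<^sup>2 * L2norm_sq \<psi>"
proof -
  have A\<psi>: "L2per (\<lambda>q. A q *v \<psi> q)"
    using A upper \<psi> by (rule L2per_matrix_mult)
  have "norm (\<psi> q) \<le> (1 / c) * norm (A q *v \<psi> q)" for q
    using lower[where q=q and \<xi>="\<psi> q"] c by (simp add: field_simps)
  from L2norm_sq_dominated[OF \<psi> A\<psi> this]
  show "c\<^sup>2 * L2norm_sq \<psi> \<le> L2norm_sq (\<lambda>q. A q *v \<psi> q)"
    using c by (simp add: power_divide field_simps)
  show "L2norm_sq (\<lambda>q. A q *v \<psi> q) \<le> C\<^sup>2 * L2norm_sq \<psi>"
    using A\<psi> \<psi> upper by (rule L2norm_sq_dominated)
qed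

locale kernel_density =
  fixes \<rho> :: "real^'d \<Rightarrow> real"
  assumes rho_integrable: "integrable lborel \<rho>" and rho_nonneg: "\<And>z. 0 \<le> \<rho> z"
begin

lemma rho_borel_measurable[measurable]: "\<rho> \<in> borel_measurable borel"
  using borel_measurable_integrable[OF rho_integrable] by simp

definition direction_moment :: "real^'d^'d" where
  "direction_moment = (\<integral>z. (\<rho> z / (norm z)\<^sup>2) *\<^sub>R outer z z \<partial>lborel)"

lemma direction_moment_quadratic_form:
  "\<xi> \<bullet> (direction_moment *v \<xi>) = (\<integral>z. \<rho> z / (norm z)\<^sup>2 * (z \<bullet> \<xi>)\<^sup>2 \<partial>lborel)"
  "integrable lborel (\<lambda>z. \<rho> z / (norm z)\<^sup>2 * (z \<bullet> \<xi>)\<^sup>2)"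
proof -
  have "integrable lborel (\<lambda>z. (\<rho> z / (norm z)\<^sup>2) *\<^sub>R outer z z)"
    using rho_integrable
  proof (rule Bochner_Integration.integrable_bound)
    show "(\<lambda>z. (\<rho> z / (norm z)\<^sup>2) *\<^sub>R outer z z) \<in> borel_measurable lborel"
      unfolding outer_def by measurable
    show "AE z in lborel. norm ((\<rho> z / (norm z)\<^sup>2) *\<^sub>R outer z z) \<le> norm (\<rho> z)"
      using rho_nonneg by (intro AE_I2) (simp add: norm_outer power2_eq_square)
  qed
  from inner_integral_scaled_outer[OF this, of \<xi>]
  show "\<xi> \<bullet> (direction_moment *v \<xi>) = (\<integral>z. \<rho> z / (norm z)\<^sup>2 * (z \<bullet> \<xi>)\<^sup>2 \<partial>lborel)"
    and "integrable lborel (\<lambda>z. \<rho> z / (norm z)\<^sup>2 * (z \<bullet> \<xi>)\<^sup>2)"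
    by (simp_all add: direction_moment_def)
qed

lemma direction_moment_pos:
  assumes x: "x \<in> esupp \<rho>" and \<xi>x: "\<xi> \<bullet> x \<noteq> 0"
  shows "0 < \<xi> \<bullet> (direction_moment *v \<xi>)"
proof -
  let ?f = "\<lambda>z. \<rho> z / (norm z)\<^sup>2 * (z \<bullet> \<xi>)\<^sup>2"
  have "\<xi> \<noteq> 0"
    using \<xi>x by auto
  define e where "e = \<bar>\<xi> \<bullet> x\<bar> / norm \<xi>"
  have "0 < e"
    using \<xi>x \<open>\<xi> \<noteq> 0\<close> by (simp add: e_def)
  have orth: "\<xi> \<bullet> z \<noteq> 0" if "z \<in> ball x e" for z
  proof
    assume "\<xi> \<bullet> z = 0"
    then have "\<bar>\<xi> \<bullet> x\<bar> = \<bar>\<xi> \<bullet> (x - z)\<bar>"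
      by (simp add: inner_diff_right)
    also have "\<dots> \<le> norm \<xi> * dist x z"
      by (simp add: dist_norm Cauchy_Schwarz_ineq2)
    also have "\<dots> < norm \<xi> * e"
      using that \<open>\<xi> \<noteq> 0\<close> by simp
    finally show False
      using \<open>\<xi> \<noteq> 0\<close> by (simp add: e_def)
  qed
  have "{z. \<rho> z \<noteq> 0} \<inter> ball x e \<subseteq> {z. ?f z \<noteq> 0}"
  proof
    fix z assume z: "z \<in> {z. \<rho> z \<noteq> 0} \<inter> ball x e"
    then have "\<xi> \<bullet> z \<noteq> 0"
      by (intro orth) simp
    with z show "z \<in> {z. ?f z \<noteq> 0}"
      by (auto simp: inner_commute)
  qed
  moreover have support: "{z. ?f z \<noteq> 0} \<in> sets lborel"
    by measurable
  ultimately have "emeasure lborel ({z. \<rho> z \<noteq> 0} \<inter> ball x e) \<le> emeasure lborel {z. ?f z \<noteq> 0}"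
    by (rule emeasure_mono)
  moreover have "0 < emeasure lborel ({z. \<rho> z \<noteq> 0} \<inter> ball x e)"
    using x \<open>0 < e\<close> by (simp add: esupp_def)
  ultimately have "\<not> (AE z in lborel. ?f z = 0)"
    by (subst AE_iff_measurable[OF support]) auto
  then have "integral\<^sup>L lborel ?f \<noteq> 0"
    using rho_nonneg by (subst integral_nonneg_eq_0_iff_AE[OF direction_moment_quadratic_form(2)]) auto
  moreover have "0 \<le> integral\<^sup>L lborel ?f"
    using rho_nonneg by simp
  ultimately show ?thesis
    by (simp add: direction_moment_quadratic_form(1))
qed

lemma direction_moment_pos_def:
  fixes J :: "(real^'d) set"
  assumes "0 < \<delta>" and J: "J \<subseteq> sphere 0 1"
    and cone: "emeasure lborel {t *\<^sub>R x | t x. x \<in> J \<and> 0 < t \<and> t < 1} > 0"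
    and supp: "{x. x \<noteq> 0 \<and> (x /\<^sub>R norm x \<in> J \<or> - (x /\<^sub>R norm x) \<in> J)} \<inter> ball 0 \<delta> \<subseteq> esupp \<rho>"
    and "\<xi> \<noteq> 0"
  shows "0 < \<xi> \<bullet> (direction_moment *v \<xi>)"
proof -
  obtain u where u: "u \<in> J" "\<xi> \<bullet> u \<noteq> 0"
    using cone_positive_measure_not_orthogonal[OF cone \<open>\<xi> \<noteq> 0\<close>] .
  have "norm u = 1"
    using u(1) J by auto
  then have "(\<delta> / 2) *\<^sub>R u \<in> esupp \<rho>"
    using \<open>0 < \<delta>\<close> u(1) by (intro subsetD[OF supp]) auto
  moreover have "\<xi> \<bullet> ((\<delta> / 2) *\<^sub>R u) \<noteq> 0"
    using \<open>0 < \<delta>\<close> u(2) by simp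
  ultimately show ?thesis
    by (rule direction_moment_pos)
qed

end

locale nonlocal_coefficients = kernel_density \<rho> for \<rho> :: "real^'d \<Rightarrow> real" +
  fixes \<mu> :: "real^'d \<Rightarrow> real" and \<alpha>1 \<alpha>2 :: real
  assumes mu_measurable: "\<mu> \<in> borel_measurable lborel"
    and mu_lower: "\<And>y. \<alpha>1 \<le> \<mu> y" and mu_upper: "\<And>y. \<mu> y \<le> \<alpha>2" and alpha1_pos: "0 < \<alpha>1"
begin

lemma mu_borel_measurable[measurable]: "\<mu> \<in> borel_measurable borel"
  using mu_measurable by simp

lemma alpha2_pos: "0 < \<alpha>2"
  using alpha1_pos mu_lower[of 0] mu_upper[of 0] by linarith

lemma mu_s_bounds: "\<alpha>1 \<le> mu_s \<mu> x y" "mu_s \<mu> x y \<le> \<alpha>2"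
  using mu_lower[of x] mu_lower[of y] mu_upper[of x] mu_upper[of y] by (simp_all add: mu_s_def)

lemma Gmat_displacement_form:
  "Gmat \<rho> \<mu> q = (\<integral>z. (\<rho> z * mu_s \<mu> q (q - z) / (norm z)\<^sup>2) *\<^sub>R outer z z \<partial>lborel)"
proof -
  have "(\<lambda>z. (\<rho> z * mu_s \<mu> q (q - z) / (norm z)\<^sup>2) *\<^sub>R outer z z) \<in> borel_measurable borel"
    unfolding outer_def mu_s_def by measurable
  from lborel_integral_reflect[OF this, of q] show ?thesis
    by (simp add: Gmat_def)
qed

lemma norm_Gmat_integrand_le:
  "norm ((\<rho> z * mu_s \<mu> q (q - z) / (norm z)\<^sup>2) *\<^sub>R outer z z) \<le> \<alpha>2 * \<rho> z"
proof -
  have "\<rho> z * mu_s \<mu> q (q - z) \<le> \<alpha>2 * \<rho> z"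
    using mult_left_mono[OF mu_s_bounds(2) rho_nonneg] by (simp add: mult.commute)
  then show ?thesis
    using rho_nonneg[of z] mu_s_bounds(1)[of q "q - z"] alpha1_pos alpha2_pos
    by (cases "z = 0") (simp_all add: norm_outer abs_mult power2_eq_square)
qed

lemma Gmat_integrable:
  "integrable lborel (\<lambda>z. (\<rho> z * mu_s \<mu> q (q - z) / (norm z)\<^sup>2) *\<^sub>R outer z z)"
proof (rule Bochner_Integration.integrable_bound)
  show "integrable lborel (\<lambda>z. \<alpha>2 * \<rho> z)"
    using rho_integrable by simp
  show "(\<lambda>z. (\<rho> z * mu_s \<mu> q (q - z) / (norm z)\<^sup>2) *\<^sub>R outer z z) \<in> borel_measurable lborel"
    unfolding outer_def mu_s_def by measurable
  show "AE z in lborel. norm ((\<rho> z * mu_s \<mu> q (q - z) / (norm z)\<^sup>2) *\<^sub>R outer z z)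
      \<le> norm (\<alpha>2 * \<rho> z)"
    using norm_Gmat_integrand_le by (intro AE_I2) (simp add: order_trans[OF _ abs_ge_self])
qed

lemma Gmat_measurable[measurable]: "Gmat \<rho> \<mu> \<in> borel_measurable lborel"
proof -
  have "(\<lambda>(q, z). (\<rho> z * mu_s \<mu> q (q - z) / (norm z)\<^sup>2) *\<^sub>R outer z z)
      \<in> borel_measurable (lborel \<Otimes>\<^sub>M lborel)"
    unfolding outer_def mu_s_def by measurable
  then show ?thesis
    unfolding Gmat_displacement_form[abs_def] by (rule lborel.borel_measurable_lebesgue_integral)
qed

lemma Gmat_periodic:
  assumes "unit_periodic \<mu>"
  shows "unit_periodic (Gmat \<rho> \<mu>)"
  unfolding unit_periodic_def
proof (intro allI impI)
  fix x k :: "real^'d" assume "\<forall>i. k $ i \<in> \<int>"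
  then have "\<mu> (x + k) = \<mu> x" "\<mu> (x + k - z) = \<mu> (x - z)" for z
    using assms unfolding unit_periodic_def by (metis add_diff_eq diff_add_eq)+
  then show "Gmat \<rho> \<mu> (x + k) = Gmat \<rho> \<mu> x"
    by (simp add: Gmat_displacement_form mu_s_def)
qed

lemma norm_Gmat_mult_le: "norm (Gmat \<rho> \<mu> q *v \<xi>) \<le> \<alpha>2 * (\<integral>z. \<rho> z \<partial>lborel) * norm \<xi>"
proof -
  have "norm (Gmat \<rho> \<mu> q) \<le> (\<integral>z. \<alpha>2 * \<rho> z \<partial>lborel)"
    unfolding Gmat_displacement_form
    by (rule Bochner_Integration.integral_norm_bound_integral[OF Gmat_integrable _ norm_Gmat_integrand_le])
      (simp add: rho_integrable)
  then show ?thesis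
    using norm_matrix_vector_mult_le[of "Gmat \<rho> \<mu> q" \<xi>] by (simp add: order_trans mult_right_mono)
qed

lemma Gmat_quadratic_form_ge: "\<alpha>1 * (\<xi> \<bullet> (direction_moment *v \<xi>)) \<le> \<xi> \<bullet> (Gmat \<rho> \<mu> q *v \<xi>)"
proof -
  have "\<alpha>1 * (\<xi> \<bullet> (direction_moment *v \<xi>)) = (\<integral>z. \<alpha>1 * (\<rho> z / (norm z)\<^sup>2 * (z \<bullet> \<xi>)\<^sup>2) \<partial>lborel)"
    by (simp only: direction_moment_quadratic_form integral_mult_right_zero)
  also have "\<dots> \<le> (\<integral>z. \<rho> z * mu_s \<mu> q (q - z) / (norm z)\<^sup>2 * (z \<bullet> \<xi>)\<^sup>2 \<partial>lborel)"
  proof (rule integral_mono)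
    show "integrable lborel (\<lambda>z. \<alpha>1 * (\<rho> z / (norm z)\<^sup>2 * (z \<bullet> \<xi>)\<^sup>2))"
      by (intro integrable_mult_right direction_moment_quadratic_form(2))
    show "integrable lborel (\<lambda>z. \<rho> z * mu_s \<mu> q (q - z) / (norm z)\<^sup>2 * (z \<bullet> \<xi>)\<^sup>2)"
      by (rule inner_integral_scaled_outer(2)[OF Gmat_integrable])
    show "\<alpha>1 * (\<rho> z / (norm z)\<^sup>2 * (z \<bullet> \<xi>)\<^sup>2) \<le> \<rho> z * mu_s \<mu> q (q - z) / (norm z)\<^sup>2 * (z \<bullet> \<xi>)\<^sup>2"
      for z
      using mult_right_mono[OF mu_s_bounds(1), of "\<rho> z / (norm z)\<^sup>2 * (z \<bullet> \<xi>)\<^sup>2"] rho_nonneg[of z]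
      by (simp add: mult_ac)
  qed
  also have "\<dots> = \<xi> \<bullet> (Gmat \<rho> \<mu> q *v \<xi>)"
    unfolding Gmat_displacement_form by (rule inner_integral_scaled_outer(1)[OF Gmat_integrable, symmetric])
  finally show ?thesis .
qed

lemma Gmat_mult_bounded_below:
  fixes \<J> :: "(real^'d) set"
  assumes "0 < \<delta>" "\<J> \<subseteq> sphere 0 1"
    and "emeasure lborel {t *\<^sub>R x | t x. x \<in> \<J> \<and> 0 < t \<and> t < 1} > 0"
    and "{x. x \<noteq> 0 \<and> (x /\<^sub>R norm x \<in> \<J> \<or> - (x /\<^sub>R norm x) \<in> \<J>)} \<inter> ball 0 \<delta> \<subseteq> esupp \<rho>"
  obtains c where "0 < c" "\<And>q \<xi>. c * norm \<xi> \<le> norm (Gmat \<rho> \<mu> q *v \<xi>)"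
proof -
  obtain c0 where c0: "0 < c0" "\<And>\<xi>. c0 * (norm \<xi>)\<^sup>2 \<le> \<xi> \<bullet> (direction_moment *v \<xi>)"
    using pos_def_quadratic_form_coercive direction_moment_pos_def[OF assms] by blast
  show thesis
  proof (rule that)
    show "0 < \<alpha>1 * c0"
      using alpha1_pos c0(1) by simp
    show "\<alpha>1 * c0 * norm \<xi> \<le> norm (Gmat \<rho> \<mu> q *v \<xi>)" for q \<xi>
    proof (rule norm_matrix_vector_mult_ge)
      have "\<alpha>1 * c0 * (norm \<xi>)\<^sup>2 \<le> \<alpha>1 * (\<xi> \<bullet> (direction_moment *v \<xi>))"
        using mult_left_mono[OF c0(2) less_imp_le[OF alpha1_pos]] by (simp add: mult.assoc)
      also have "\<dots> \<le> \<xi> \<bullet> (Gmat \<rho> \<mu> q *v \<xi>)"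
        by (rule Gmat_quadratic_form_ge)
      finally show "\<alpha>1 * c0 * (norm \<xi>)\<^sup>2 \<le> \<xi> \<bullet> (Gmat \<rho> \<mu> q *v \<xi>)" .
    qed
  qed
qed

end

theorem proposition2p2:
  fixes \<rho> \<mu> :: "real^'d \<Rightarrow> real" and \<J> :: "(real^'d) set"
    and \<delta>0 \<alpha>1 \<alpha>2 :: real
  assumes rho_int: "integrable lborel \<rho>"
    and rho_nonneg: "\<And>z. \<rho> z \<ge> 0"
    and rho_even: "\<And>z. \<rho> (- z) = \<rho> z"
    and a1_pos: "(LINT z|lborel. \<rho> z) > 0"
    and a2_fin: "integrable lborel (\<lambda>z. (norm z)\<^sup>2 * \<rho> z)"
    and delta0: "\<delta>0 > 0"
    and J_sphere: "\<J> \<subseteq> sphere 0 1"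
    and J_open: "openin (top_of_set (sphere 0 1)) \<J>"
    and J_pos: "emeasure lborel {t *\<^sub>R x | t x. x \<in> \<J> \<and> 0 < t \<and> t < 1} > 0"
    and supp: "{x. x \<noteq> 0 \<and> (x /\<^sub>R norm x \<in> \<J> \<or> - (x /\<^sub>R norm x) \<in> \<J>)} \<inter> ball 0 \<delta>0
                 \<subseteq> esupp \<rho>"
    and mu_meas: "\<mu> \<in> borel_measurable lborel"
    and mu_per: "unit_periodic \<mu>"
    and alpha: "0 < \<alpha>1" "\<alpha>1 \<le> \<alpha>2"
    and mu_bounds: "\<And>y. \<alpha>1 \<le> \<mu> y \<and> \<mu> y \<le> \<alpha>2"
  shows "\<exists>c C. 0 < c \<and> 0 < C \<and>
           (\<forall>\<psi>. L2per \<psi> \<longrightarrow> L2per (Gop \<rho> \<mu> \<psi>) \<and>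
                 c * L2norm_sq \<psi> \<le> L2norm_sq (Gop \<rho> \<mu> \<psi>) \<and>
                 L2norm_sq (Gop \<rho> \<mu> \<psi>) \<le> C * L2norm_sq \<psi>) \<and>
           (\<forall>\<phi>. L2per \<phi> \<longrightarrow> (\<exists>\<psi>. L2per \<psi> \<and>
                 (AE q in lborel. Gop \<rho> \<mu> \<psi> q = \<phi> q)))"
proof -
  interpret nonlocal_coefficients \<rho> \<mu> \<alpha>1 \<alpha>2
    using rho_int rho_nonneg mu_meas mu_bounds alpha by unfold_locales auto
  obtain c where "0 < c" and lower: "\<And>q \<xi>. c * norm \<xi> \<le> norm (Gmat \<rho> \<mu> q *v \<xi>)"
    using Gmat_mult_bounded_below[OF delta0 J_sphere J_pos supp] by blast
  define C where "C = \<alpha>2 * (\<integral>z. \<rho> z \<partial>lborel)"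
  have "0 < C"
    using alpha a1_pos by (simp add: C_def)
  have upper: "\<And>q \<xi>. norm (Gmat \<rho> \<mu> q *v \<xi>) \<le> C * norm \<xi>"
    unfolding C_def by (rule norm_Gmat_mult_le)
  note G = Gmat_measurable Gmat_periodic[OF mu_per]
  have bounds: "L2per (Gop \<rho> \<mu> \<psi>) \<and> c\<^sup>2 * L2norm_sq \<psi> \<le> L2norm_sq (Gop \<rho> \<mu> \<psi>) \<and>
      L2norm_sq (Gop \<rho> \<mu> \<psi>) \<le> C\<^sup>2 * L2norm_sq \<psi>" if "L2per \<psi>" for \<psi>
    using L2per_matrix_mult[OF G upper that] L2norm_sq_matrix_mult_bounds[OF G \<open>0 < c\<close> lower upper that]
    unfolding Gop_def[abs_def] by simp
  have solvable: "\<exists>\<psi>. L2per \<psi> \<and> (AE q in lborel. Gop \<rho> \<mu> \<psi> q = \<phi> q)" if "L2per \<phi>" for \<phi>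
    using L2per_matrix_mult_solvable[OF G \<open>0 < c\<close> lower that] by (auto simp: Gop_def)
  show ?thesis
    by (rule exI[of _ "c\<^sup>2"], rule exI[of _ "C\<^sup>2"])
      (use bounds solvable \<open>0 < c\<close> \<open>0 < C\<close> in auto)
qed

end
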